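(* Let $0<x_1<x_2<\dots<x_n<1$ and $a_1,\dots,a_n>0$ with $a_1+\dots+a_n=1$, and let $\mu=\sum_{i=1}^n a_i\delta_{x_i}$. Let $K$, $\tau$, $\mathbf{P}$ and $\nu$ be as in the setting below. Then $$s_\nu(z)=\frac{1}{z(1-z)\sum_{i=1}^n\frac{a_i}{z-(1-x_i)}},$$ and $\nu$ is purely atomic with exactly $n+1$ atoms, located in increasing order at $0,y_1,\dots,y_{n-1},1$, where $y_i$ is the unique root of $y\mapsto\sum_{j=1}^n\frac{a_j}{y-(1-x_j)}$ in the interval $(1-x_{n-i+1},1-x_{n-i})$. The mass of each atom is $\nu(\{y_i\})=\lim_{z\to y_i}(y_i-z)s_\nu(z)$ (the residue of the rational function $-s_\nu$ at $y_i$). Consequently, for all $N\ge1$, $$\mathbf{P}(N\in\tau)=\frac{1}{m_K}+\sum_{i=1}^{n-1}y_i^N\,\nu(\{y_i\}).$$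
   Context: Setting: $\mu$ is a probability measure on $[0,1]$; $K$ is the probability measure on $\mathbf{N}\cup\{\infty\}$ with $K(n)=\int_0^1(1-x)^{n-1}x\,\mathrm{d}\mu(x)$ for $n\ge1$ and $K(\{\infty\})=\mu(\{0\})$; $\tau=\{\tau_i:i\ge0\}$ with $\tau_0=0$, $\tau_n=\eta_1+\dots+\eta_n$, $(\eta_i)$ i.i.d. with law $K$, and $\mathbf{P}$ its law; $\nu$ is the probability measure on $[0,1]$ with $\mathbf{P}(N\in\tau)=\int_0^1x^N\mathrm{d}\nu(x)$ for all $N\ge0$, equivalently $s_\nu(z)s_\mu(1-z)=\frac{1}{z(1-z)}$ on $\mathbf{C}_+$. $m_K=\sum_{n\ge1}nK(n)$. Stieltjes transform: $s_\mu(z)=\int\frac{\mathrm{d}\mu(x)}{x-z}$. *)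

theory Defs
  imports "HOL-Probability.Probability"
begin

text \<open>The inter-arrival law K for mu = sum_i a_i delta_{x_i} (i = 1..n), written out:
  K(m) = integral of (1-x)^(m-1) x d mu(x) = sum_i a_i (1-x_i)^(m-1) x_i for m >= 1.
  Since all x_i > 0, K(infinity) = mu({0}) = 0, so K is a law on the positive integers.\<close>
definition Kdisc :: "nat \<Rightarrow> (nat \<Rightarrow> real) \<Rightarrow> (nat \<Rightarrow> real) \<Rightarrow> nat \<Rightarrow> real" where
  "Kdisc n a x m = (if m = 0 then 0 else (\<Sum>i=1..n. a i * (1 - x i) ^ (m - 1) * x i))"

fun conv_pow :: "(nat \<Rightarrow> real) \<Rightarrow> nat \<Rightarrow> nat \<Rightarrow> real" where
  "conv_pow K 0 N = (if N = 0 then 1 else 0)"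
| "conv_pow K (Suc m) N = (\<Sum>k\<le>N. K k * conv_pow K m (N - k))"

text \<open>Renewal mass P(N in tau) = sum over m of P(tau_m = N).\<close>
definition renewal_prob :: "(nat \<Rightarrow> real) \<Rightarrow> nat \<Rightarrow> real" where
  "renewal_prob K N = (\<Sum>m. conv_pow K m N)"

definition mean_K :: "(nat \<Rightarrow> real) \<Rightarrow> real" where
  "mean_K K = (\<Sum>m. real m * K m)"

definition stieltjes :: "real measure \<Rightarrow> complex \<Rightarrow> complex" where
  "stieltjes M z = (LINT t|M. 1 / (complex_of_real t - z))"

end

theory Submission
  imports Defs "HOL-Computational_Algebra.Polynomial"
begin

text \<open>
  Write \<open>b j = 1 - x j\<close> for the poles of \<open>F t = \<Sum>j. a j / (t - b j)\<close> and
  \<open>Q t = \<Prod>j. (t - b j)\<close>. Between consecutive poles \<open>F\<close> decreases from \<open>+\<infinity>\<close> to \<open>-\<infinity>\<close>,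
  so it has exactly one root \<open>y i\<close> in each of the \<open>n - 1\<close> gaps. Put \<open>W = {0, 1, y 1, ..., y (n-1)}\<close>
  and let \<open>c w\<close> be the coefficients of the partial fraction expansion
  \<open>Q z / \<Prod>w\<in>W. (z - w) = \<Sum>w\<in>W. c w / (z - w)\<close>. Comparing leading coefficients gives
  \<open>\<Sum>w. c w = 1\<close>, and evaluating at the roots \<open>b j\<close> of \<open>Q\<close> gives \<open>\<Sum>w. c w / (w - b j) = 0\<close>.
  Together with \<open>\<Sum>i. a i x i / (w - b i) = 1 + (1 - w) F w = 1\<close> for \<open>0 \<noteq> w \<in> W\<close>, this shows
  that \<open>v N = \<Sum>w. c w w^N\<close> solves the renewal equation \<open>v N = \<Sum>k. K k v (N - k)\<close>, \<open>v 0 = 1\<close>,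
  so \<open>v N = P(N \<in> \<tau>)\<close>. Hence \<open>\<nu>\<close>, which lives on \<open>[0, 1]\<close>, has the moments of
  \<open>\<Sum>w. c w \<delta>\<^sub>w\<close>, and approximating the indicator of a point by the polynomials
  \<open>(1 - (s - t)\<^sup>2 / 2)^k\<close> shows that \<open>\<nu> = \<Sum>w. c w \<delta>\<^sub>w\<close>. All claims are read off this
  representation; in particular the mass at \<open>1\<close> is \<open>c 1 = 1 / F 1 = 1 / m\<^sub>K\<close>.
\<close>

section \<open>Polynomial interpolation and partial fractions\<close>

lemma poly_monic_linear:
  fixes c z :: "'a::comm_ring_1"
  shows "poly [:- c, 1:] z = z - c"
  by simp

lemma
  fixes \<beta> :: "'b \<Rightarrow> 'a::field"
  shows degree_prod_monic_linear: "degree (\<Prod>j\<in>J. [:- \<beta> j, 1:]) = card J"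
    and coeff_prod_monic_linear: "coeff (\<Prod>j\<in>J. [:- \<beta> j, 1:]) (card J) = 1"
proof -
  show deg: "degree (\<Prod>j\<in>J. [:- \<beta> j, 1:]) = card J"
    by (cases "finite J") (auto simp: degree_prod_eq_sum_degree)
  have "lead_coeff (\<Prod>j\<in>J. [:- \<beta> j, 1:]) = 1"
    by (simp add: lead_coeff_prod)
  then show "coeff (\<Prod>j\<in>J. [:- \<beta> j, 1:]) (card J) = 1"
    by (simp add: deg)
qed

lemma lagrange_interpolation:
  fixes p :: "'a::field poly" and \<beta> :: "'b \<Rightarrow> 'a"
  assumes W: "finite W" and inj: "inj_on \<beta> W" and deg: "degree p < card W"
  shows "p = (\<Sum>w\<in>W. smult (poly p (\<beta> w) / (\<Prod>v\<in>W-{w}. \<beta> w - \<beta> v))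
                         (\<Prod>v\<in>W-{w}. [:- \<beta> v, 1:]))"
    (is "p = ?q")
proof (rule poly_eqI_degree[where A = "\<beta> ` W"])
  fix z assume "z \<in> \<beta> ` W"
  then obtain u where u: "u \<in> W" "z = \<beta> u" by blast
  have vanish: "(\<Sum>w\<in>W-{u}. poly p (\<beta> w) / (\<Prod>v\<in>W-{w}. \<beta> w - \<beta> v)
                  * (\<Prod>v\<in>W-{w}. \<beta> u - \<beta> v)) = 0"
    using u W by (intro sum.neutral ballI) (auto simp: prod_zero_iff)
  have "poly ?q z = (\<Sum>w\<in>W. poly p (\<beta> w) / (\<Prod>v\<in>W-{w}. \<beta> w - \<beta> v) * (\<Prod>v\<in>W-{w}. \<beta> u - \<beta> v))"
    by (simp add: poly_sum poly_prod u)
  also have "\<dots> = poly p (\<beta> u) / (\<Prod>v\<in>W-{u}. \<beta> u - \<beta> v) * (\<Prod>v\<in>W-{u}. \<beta> u - \<beta> v)"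
    using W u vanish by (simp add: sum.remove del: times_divide_eq_left)
  also have "\<dots> = poly p z"
    using W u inj by (simp add: inj_on_eq_iff)
  finally show "poly p z = poly ?q z" by simp
next
  have card: "card (\<beta> ` W) = card W" by (rule card_image[OF inj])
  show "degree p < card (\<beta> ` W)" using deg card by simp
  have "degree ?q \<le> card W - 1"
  proof (rule degree_sum_le[THEN order.trans])
    fix w assume "w \<in> W"
    then show "degree (smult (poly p (\<beta> w) / (\<Prod>v\<in>W-{w}. \<beta> w - \<beta> v)) (\<Prod>v\<in>W-{w}. [:- \<beta> v, 1:]))
                 \<le> card W - 1"
      using W by (auto intro: degree_smult_le[THEN order.trans] simp: degree_prod_monic_linear)
  qed (use W in auto)
  then show "degree ?q < card (\<beta> ` W)" using deg card by linarith
qed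

lemma lagrange_leading_coeff:
  fixes p :: "'a::field poly" and \<beta> :: "'b \<Rightarrow> 'a"
  assumes W: "finite W" and inj: "inj_on \<beta> W" and deg: "degree p < card W"
  shows "coeff p (card W - 1) = (\<Sum>w\<in>W. poly p (\<beta> w) / (\<Prod>v\<in>W-{w}. \<beta> w - \<beta> v))"
proof -
  have "coeff (\<Prod>v\<in>W-{w}. [:- \<beta> v, 1:]) (card W - 1) = 1" if "w \<in> W" for w
    using coeff_prod_monic_linear[of \<beta> "W - {w}"] W that by simp
  then show ?thesis
    by (subst lagrange_interpolation[OF W inj deg]) (simp add: coeff_sum)
qed

lemma sum_divide_times_prod:
  fixes z :: "'a::field"
  assumes I: "finite I" and nz: "\<And>j. j \<in> I \<Longrightarrow> z \<noteq> \<beta> j"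
  shows "(\<Sum>i\<in>I. \<alpha> i / (z - \<beta> i)) * (\<Prod>j\<in>I. z - \<beta> j) = (\<Sum>i\<in>I. \<alpha> i * (\<Prod>j\<in>I-{i}. z - \<beta> j))"
  unfolding sum_distrib_right
proof (rule sum.cong[OF refl])
  fix i assume i: "i \<in> I"
  then have "(\<Prod>j\<in>I. z - \<beta> j) = (z - \<beta> i) * (\<Prod>j\<in>I-{i}. z - \<beta> j)"
    using I by (simp add: prod.remove)
  then show "\<alpha> i / (z - \<beta> i) * (\<Prod>j\<in>I. z - \<beta> j) = \<alpha> i * (\<Prod>j\<in>I-{i}. z - \<beta> j)"
    using nz[OF i] by simp
qed

lemma partial_fractions:
  fixes p :: "'a::field poly" and \<beta> :: "'b \<Rightarrow> 'a"
  assumes W: "finite W" and inj: "inj_on \<beta> W" and deg: "degree p < card W"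
    and z: "z \<notin> \<beta> ` W"
  shows "poly p z / (\<Prod>w\<in>W. z - \<beta> w)
           = (\<Sum>w\<in>W. poly p (\<beta> w) / (\<Prod>v\<in>W-{w}. \<beta> w - \<beta> v) / (z - \<beta> w))"
proof -
  have "(\<Sum>w\<in>W. poly p (\<beta> w) / (\<Prod>v\<in>W-{w}. \<beta> w - \<beta> v) / (z - \<beta> w)) * (\<Prod>w\<in>W. z - \<beta> w)
        = poly p z"
    using arg_cong[OF lagrange_interpolation[OF W inj deg], of "\<lambda>q. poly q z"] z
    by (subst sum_divide_times_prod[OF W]) (auto simp: poly_sum poly_prod)
  moreover have "(\<Prod>w\<in>W. z - \<beta> w) \<noteq> 0" using W z by auto
  ultimately show ?thesis by (simp add: field_simps)
qed

lemma inj_on_complex_of_real: "inj_on complex_of_real A"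
  by (simp add: inj_on_def)

lemma tendsto_residue_simple_poles:
  fixes \<omega> :: "'b \<Rightarrow> 'a::real_normed_field"
  assumes W: "finite W" and inj: "inj_on \<omega> W" and u: "u \<in> W"
  shows "((\<lambda>z. (\<omega> u - z) * (\<Sum>w\<in>W. c w / (\<omega> w - z))) \<longlongrightarrow> c u) (at (\<omega> u) within S)"
proof -
  let ?R = "\<lambda>z. \<Sum>w\<in>W-{u}. c w * (\<omega> u - z) / (\<omega> w - z)"
  have "\<omega> w \<noteq> \<omega> u" if "w \<in> W - {u}" for w
    using inj u that by (auto dest: inj_onD)
  then have "(?R \<longlongrightarrow> (\<Sum>w\<in>W-{u}. c w * (\<omega> u - \<omega> u) / (\<omega> w - \<omega> u))) (at (\<omega> u) within S)"
    by (intro tendsto_intros) auto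
  then have "((\<lambda>z. c u + ?R z) \<longlongrightarrow> c u) (at (\<omega> u) within S)"
    using tendsto_add[OF tendsto_const] by fastforce
  moreover have "eventually (\<lambda>z. c u + ?R z = (\<omega> u - z) * (\<Sum>w\<in>W. c w / (\<omega> w - z))) (at (\<omega> u) within S)"
    unfolding eventually_at_filter
  proof (intro always_eventually allI impI)
    fix z assume "z \<noteq> \<omega> u"
    then show "c u + ?R z = (\<omega> u - z) * (\<Sum>w\<in>W. c w / (\<omega> w - z))"
      using W u by (simp add: sum_distrib_left sum.remove field_simps)
  qed
  ultimately show ?thesis by (rule tendsto_cong[THEN iffD1, rotated])
qed

section \<open>Renewal sequences\<close>

lemma conv_pow_eq_0:
  assumes "K 0 = 0" and "N < m"
  shows "conv_pow K m N = 0"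
  using assms(2)
proof (induction m arbitrary: N)
  case (Suc m)
  have "K k * conv_pow K m (N - k) = 0" if "k \<le> N" for k
    using Suc that assms(1) by (cases "k = 0") auto
  then show ?case by (auto intro!: sum.neutral)
qed simp

lemma renewal_prob_eq_sum_atMost:
  assumes "K 0 = 0"
  shows "renewal_prob K N = (\<Sum>m\<le>N. conv_pow K m N)"
  unfolding renewal_prob_def by (rule suminf_finite) (auto intro: conv_pow_eq_0[where K=K, OF assms])

lemma renewal_prob_recursion:
  assumes K0: "K 0 = 0" and N: "N \<ge> 1"
  shows "renewal_prob K N = (\<Sum>k\<le>N. K k * renewal_prob K (N - k))"
proof -
  have shift: "K k * (\<Sum>m<N. conv_pow K m (N - k)) = K k * renewal_prob K (N - k)" if "k \<le> N" for k
  proof (cases "k = 0")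
    case False
    then have "(\<Sum>m<N. conv_pow K m (N - k)) = (\<Sum>m\<le>N-k. conv_pow K m (N - k))"
      using that by (intro sum.mono_neutral_right) (auto intro: conv_pow_eq_0[where K=K, OF K0])
    then show ?thesis by (simp add: renewal_prob_eq_sum_atMost[where K=K, OF K0])
  qed (simp add: K0)
  have "renewal_prob K N = conv_pow K 0 N + (\<Sum>m<N. conv_pow K (Suc m) N)"
    unfolding renewal_prob_eq_sum_atMost[where K=K, OF K0] by (rule sum.atMost_shift)
  also have "\<dots> = (\<Sum>k\<le>N. \<Sum>m<N. K k * conv_pow K m (N - k))"
    using N by (simp add: sum.swap[of _ "{..<N}"])
  also have "\<dots> = (\<Sum>k\<le>N. K k * renewal_prob K (N - k))"
    using shift by (simp add: sum_distrib_left)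
  finally show ?thesis .
qed

lemma renewal_prob_unique:
  assumes K0: "K 0 = 0" and v0: "v 0 = 1"
    and v_rec: "\<And>N. N \<ge> 1 \<Longrightarrow> v N = (\<Sum>k\<le>N. K k * v (N - k))"
  shows "renewal_prob K N = v N"
proof (induction N rule: less_induct)
  case (less N)
  show ?case
  proof (cases "N = 0")
    case True
    then show ?thesis using v0 by (simp add: renewal_prob_eq_sum_atMost[where K=K, OF K0])
  next
    case False
    have IH: "K k * renewal_prob K (N - k) = K k * v (N - k)" for k
      using less K0 False by (cases "k = 0") auto
    have "renewal_prob K N = (\<Sum>k\<le>N. K k * renewal_prob K (N - k))"
      using False by (simp add: renewal_prob_recursion[where K=K, OF K0])
    also have "\<dots> = v N"
      using False by (simp only: IH v_rec)
    finally show ?thesis .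
  qed
qed

lemma sum_power_mult_power:
  fixes w b :: "'a::comm_ring_1"
  shows "(w - b) * (\<Sum>k=1..N. b ^ (k - 1) * w ^ (N - k)) = w ^ N - b ^ N"
proof -
  have "(\<Sum>k=1..N. b ^ (k - 1) * w ^ (N - k)) = (\<Sum>i<N. b ^ (N - Suc i) * w ^ i)"
    by (rule sum.reindex_bij_witness[of _ "\<lambda>i. N - i" "\<lambda>k. N - k"]) (auto simp: Suc_diff_Suc)
  then show ?thesis by (simp add: power_diff_sumr2)
qed

lemma Kdisc_convolution_power:
  assumes "\<And>i. i \<in> {1..n} \<Longrightarrow> w \<noteq> 1 - x i"
  shows "(\<Sum>k\<le>N. Kdisc n a x k * w ^ (N - k))
           = (\<Sum>i=1..n. a i * x i * ((w ^ N - (1 - x i) ^ N) / (w - (1 - x i))))"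
proof -
  have "(\<Sum>k\<le>N. Kdisc n a x k * w ^ (N - k)) = (\<Sum>k=1..N. Kdisc n a x k * w ^ (N - k))"
    by (rule sum.mono_neutral_right) (auto simp: Kdisc_def)
  also have "\<dots> = (\<Sum>i=1..n. a i * x i * (\<Sum>k=1..N. (1 - x i) ^ (k - 1) * w ^ (N - k)))"
    by (simp add: Kdisc_def sum_distrib_left sum_distrib_right algebra_simps) (rule sum.swap)
  also have "\<dots> = (\<Sum>i=1..n. a i * x i * ((w ^ N - (1 - x i) ^ N) / (w - (1 - x i))))"
  proof (intro sum.cong refl arg_cong[where f = "(*) _"])
    fix i assume "i \<in> {1..n}"
    then have "w - (1 - x i) \<noteq> 0" using assms by auto
    then show "(\<Sum>k=1..N. (1 - x i) ^ (k - 1) * w ^ (N - k)) = (w ^ N - (1 - x i) ^ N) / (w - (1 - x i))"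
      using sum_power_mult_power[of w "1 - x i" N] by (simp add: eq_divide_eq mult.commute)
  qed
  finally show ?thesis .
qed

lemma mean_K_Kdisc:
  assumes "\<And>i. i \<in> {1..n} \<Longrightarrow> 0 < x i \<and> x i \<le> 1"
  shows "mean_K (Kdisc n a x) = (\<Sum>i=1..n. a i / x i)"
proof -
  have "(\<lambda>m. \<Sum>i=1..n. a i * x i * (real (Suc m) * (1 - x i) ^ m))
          sums (\<Sum>i=1..n. a i * x i * (1 / (1 - (1 - x i))\<^sup>2))"
    using assms by (intro sums_sum sums_mult geometric_deriv_sums) force
  moreover have "a i * x i * (1 / (1 - (1 - x i))\<^sup>2) = a i / x i" if "i \<in> {1..n}" for i
    using assms[OF that] by (simp add: power2_eq_square)
  ultimately have "(\<lambda>m. real (Suc m) * Kdisc n a x (Suc m)) sums (\<Sum>i=1..n. a i / x i)"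
    by (simp add: Kdisc_def sum_distrib_left algebra_simps)
  then have "(\<lambda>m. real m * Kdisc n a x m) sums (\<Sum>i=1..n. a i / x i)"
    by (subst (asm) sums_Suc_iff) simp
  then show ?thesis unfolding mean_K_def by (rule sums_unique[symmetric])
qed

section \<open>Measures on the unit interval with finitely many atoms\<close>

lemma integral_eq_sum_atoms:
  fixes M :: "real measure" and g :: "real \<Rightarrow> 'b::{banach, second_countable_topology}"
  assumes M: "finite_measure M" "sets M = sets borel"
    and W: "finite W" "AE t in M. t \<in> W" and g: "g \<in> borel_measurable borel"
  shows "(\<integral>t. g t \<partial>M) = (\<Sum>w\<in>W. measure M {w} *\<^sub>R g w)"
proof -
  have meas: "measurable M N = measurable borel N" for N
    by (rule measurable_cong_sets[OF M(2) refl])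
  have "(\<integral>t. g t \<partial>M) = (\<integral>t. (\<Sum>w\<in>W. indicator {w} t *\<^sub>R g w) \<partial>M)"
  proof (rule integral_cong_AE)
    show "AE t in M. g t = (\<Sum>w\<in>W. indicator {w} t *\<^sub>R g w)"
      using W(2)
    proof eventually_elim
      fix t assume "t \<in> W"
      have "(\<Sum>w\<in>W. indicator {w} t *\<^sub>R g w) = (\<Sum>w\<in>W. if w = t then g w else 0)"
        by (rule sum.cong) (auto simp: indicator_def)
      then show "g t = (\<Sum>w\<in>W. indicator {w} t *\<^sub>R g w)"
        using \<open>t \<in> W\<close> W(1) by simp
    qed
  qed (use g in \<open>simp_all add: meas\<close>)
  also have "\<dots> = (\<Sum>w\<in>W. \<integral>t. indicator {w} t *\<^sub>R g w \<partial>M)"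
    using M by (intro Bochner_Integration.integral_sum integrable_scaleR_left
        finite_measure.integrable_const_bound[where B = 1]) (auto simp: meas)
  also have "\<dots> = (\<Sum>w\<in>W. measure M {w} *\<^sub>R g w)"
    using finite_measure.emeasure_finite[OF M(1)]
    by (intro sum.cong refl) (simp add: M(2) sets_eq_imp_space_eq[OF M(2)] less_top[symmetric])
  finally show ?thesis .
qed

lemma bump_power_tendsto_indicator:
  fixes s t :: real
  assumes "t \<in> {0..1}" "s \<in> {0..1}"
  shows "(\<lambda>k. (1 - (s - t)\<^sup>2 / 2) ^ k) \<longlonglongrightarrow> indicator {t} s"
proof (cases "s = t")
  case False
  have "(s - t)\<^sup>2 \<le> 1" using assms by (simp add: abs_square_le_1 abs_le_iff)
  moreover have "(s - t)\<^sup>2 > 0" using False by simp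
  ultimately have "norm (1 - (s - t)\<^sup>2 / 2) < 1" by simp
  then show ?thesis using False by (simp add: LIMSEQ_power_zero)
qed simp

lemma integral_poly_of_moments:
  fixes M :: "real measure" and c :: "real \<Rightarrow> real"
  assumes M: "prob_space M" "sets M = sets borel" "measure M {0..1} = 1"
    and moments: "\<And>N::nat. (\<integral>t. t ^ N \<partial>M) = (\<Sum>w\<in>W. c w * w ^ N)"
  shows "(\<integral>s. poly p s \<partial>M) = (\<Sum>w\<in>W. c w * poly p w)"
proof -
  interpret prob_space M by (rule M(1))
  have "integrable M (\<lambda>s. s ^ j)" for j
  proof (rule integrable_const_bound[where B = 1])
    have "AE s in M. s \<in> {0..1}"
      using AE_in_set_eq_1[of "{0..1}"] M by simp
    then show "AE s in M. norm (s ^ j) \<le> 1"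
      by eventually_elim (auto intro: power_le_one)
  qed (simp add: measurable_cong_sets[OF M(2) refl])
  then have "(\<integral>s. poly p s \<partial>M) = (\<Sum>j\<le>degree p. coeff p j * (\<Sum>w\<in>W. c w * w ^ j))"
    by (simp add: poly_altdef moments)
  also have "\<dots> = (\<Sum>w\<in>W. c w * poly p w)"
    unfolding poly_altdef sum_distrib_left by (subst sum.swap) (simp add: algebra_simps)
  finally show ?thesis .
qed

lemma integral_bump_power_tendsto_measure:
  fixes M :: "real measure"
  assumes M: "prob_space M" "sets M = sets borel" "measure M {0..1} = 1" and t: "t \<in> {0..1}"
  shows "(\<lambda>k. \<integral>s. (1 - (s - t)\<^sup>2 / 2) ^ k \<partial>M) \<longlonglongrightarrow> measure M {t}"
proof -
  interpret prob_space M by (rule M(1))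
  have AE_01: "AE s in M. s \<in> {0..1}"
    using AE_in_set_eq_1[of "{0..1}"] M by simp
  have "(\<lambda>k. \<integral>s. (1 - (s - t)\<^sup>2 / 2) ^ k \<partial>M) \<longlonglongrightarrow> (\<integral>s. indicator {t} s \<partial>M)"
  proof (rule integral_dominated_convergence[where w = "\<lambda>_. 1"])
    show "AE s in M. (\<lambda>k. (1 - (s - t)\<^sup>2 / 2) ^ k) \<longlonglongrightarrow> indicator {t} s"
      using AE_01 by eventually_elim (rule bump_power_tendsto_indicator[OF t])
    show "AE s in M. norm ((1 - (s - t)\<^sup>2 / 2) ^ k) \<le> 1" for k
      using AE_01
    proof eventually_elim
      fix s :: real assume "s \<in> {0..1}"
      then have "(s - t)\<^sup>2 \<le> 1" using t by (auto simp: abs_square_le_1 abs_le_iff)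
      then show "norm ((1 - (s - t)\<^sup>2 / 2) ^ k) \<le> 1" by (auto simp: power_abs intro!: power_le_one)
    qed
  qed (auto simp: measurable_cong_sets[OF M(2) refl])
  then show ?thesis using M(2) by simp
qed

lemma measure_singleton_of_moments:
  fixes M :: "real measure" and c :: "real \<Rightarrow> real"
  assumes M: "prob_space M" "sets M = sets borel" "measure M {0..1} = 1"
    and W: "finite W" "W \<subseteq> {0..1}"
    and moments: "\<And>N::nat. (\<integral>t. t ^ N \<partial>M) = (\<Sum>w\<in>W. c w * w ^ N)"
  shows "measure M {t} = (if t \<in> W then c t else 0)"
proof (cases "t \<in> {0..1}")
  case True
  have "poly [:1 - t\<^sup>2 / 2, t, -1/2:] s = 1 - (s - t)\<^sup>2 / 2" for s
    by (simp add: power2_eq_square field_simps)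
  then have bump: "(1 - (s - t)\<^sup>2 / 2) ^ k = poly ([:1 - t\<^sup>2 / 2, t, -1/2:] ^ k) s" for k s
    by (simp only: poly_power)
  have "(\<integral>s. (1 - (s - t)\<^sup>2 / 2) ^ k \<partial>M) = (\<Sum>w\<in>W. c w * (1 - (w - t)\<^sup>2 / 2) ^ k)" for k
    unfolding bump by (rule integral_poly_of_moments[OF M moments])
  then have "(\<lambda>k. \<Sum>w\<in>W. c w * (1 - (w - t)\<^sup>2 / 2) ^ k) \<longlonglongrightarrow> measure M {t}"
    using integral_bump_power_tendsto_measure[OF M True] by simp
  moreover have "(\<lambda>k. \<Sum>w\<in>W. c w * (1 - (w - t)\<^sup>2 / 2) ^ k) \<longlonglongrightarrow> (\<Sum>w\<in>W. c w * indicator {t} w)"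
    using W True by (intro tendsto_intros bump_power_tendsto_indicator) auto
  ultimately have "measure M {t} = (\<Sum>w\<in>W. c w * indicator {t} w)"
    by (rule LIMSEQ_unique)
  also have "\<dots> = (\<Sum>w\<in>W. if w = t then c w else 0)"
    by (rule sum.cong) (auto simp: indicator_def)
  finally show ?thesis using W(1) by simp
next
  case False
  interpret prob_space M by (rule M(1))
  have "measure M {t} \<le> measure M (space M - {0..1})"
    using False M(2) by (intro finite_measure_mono) (auto simp: sets_eq_imp_space_eq[OF M(2)])
  also have "\<dots> = 0" using prob_compl[of "{0..1}"] M by simp
  finally show ?thesis using False W(2) by (auto intro: antisym)
qed

section \<open>The roots of \<open>F\<close> and the weights\<close>

locale atomic_renewal =
  fixes n :: nat and x a :: "nat \<Rightarrow> real"
  assumes n_pos: "n \<ge> 1" and x_pos: "0 < x 1"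
    and x_mono: "\<And>i. 1 \<le> i \<Longrightarrow> i < n \<Longrightarrow> x i < x (Suc i)" and x_lt1: "x n < 1"
    and a_pos: "\<And>i. 1 \<le> i \<Longrightarrow> i \<le> n \<Longrightarrow> a i > 0" and a_sum: "(\<Sum>i=1..n. a i) = 1"
begin

lemma x_strict_mono: "1 \<le> i \<Longrightarrow> i < j \<Longrightarrow> j \<le> n \<Longrightarrow> x i < x j"
  by (rule lift_Suc_mono_less_ivl[where N = "{1..<n}"]) (auto intro: x_mono)

lemma x_mono_le: "1 \<le> i \<Longrightarrow> i \<le> j \<Longrightarrow> j \<le> n \<Longrightarrow> x i \<le> x j"
  using x_strict_mono[of i j] by (cases "i = j") auto

lemma x_in_01: "i \<in> {1..n} \<Longrightarrow> 0 < x i \<and> x i < 1"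
  using x_mono_le[of 1 i] x_mono_le[of i n] x_pos x_lt1 by auto

lemma pole_outside_gap:
  assumes "1 \<le> k" "k < n" "j \<in> {1..n}"
  shows "1 - x j \<ge> 1 - x k \<or> 1 - x j \<le> 1 - x (Suc k)"
  using assms x_mono_le[of j k] x_mono_le[of "Suc k" j] by (cases "j \<le> k") auto

definition F :: "real \<Rightarrow> real" where
  "F t = (\<Sum>j=1..n. a j / (t - (1 - x j)))"

lemma F_strict_antimono:
  assumes st: "s < t" and same_side: "\<And>j. j \<in> {1..n} \<Longrightarrow> (s - (1 - x j)) * (t - (1 - x j)) > 0"
  shows "F t < F s"
proof -
  have "0 < (\<Sum>j=1..n. a j / (s - (1 - x j)) - a j / (t - (1 - x j)))"
  proof (rule sum_pos)
    fix j assume j: "j \<in> {1..n}"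
    have "s - (1 - x j) \<noteq> 0" "t - (1 - x j) \<noteq> 0"
      using same_side[OF j] by auto
    then have "a j / (s - (1 - x j)) - a j / (t - (1 - x j))
                 = a j * (t - s) / ((s - (1 - x j)) * (t - (1 - x j)))"
      by (simp add: field_simps)
    also have "\<dots> > 0"
      using same_side[OF j] a_pos j st by (intro divide_pos_pos) auto
    finally show "0 < a j / (s - (1 - x j)) - a j / (t - (1 - x j))" .
  qed (use n_pos in auto)
  then show ?thesis by (simp add: F_def sum_subtractf)
qed

lemma F_strict_antimono_gap:
  assumes k: "1 \<le> k" "k < n" and "1 - x (Suc k) < s" "s < t" "t < 1 - x k"
  shows "F t < F s"
proof (rule F_strict_antimono)
  fix j assume "j \<in> {1..n}"
  then consider "1 - x j \<ge> 1 - x k" | "1 - x j \<le> 1 - x (Suc k)"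
    using pole_outside_gap[OF k] by blast
  then show "(s - (1 - x j)) * (t - (1 - x j)) > 0"
    by cases (use assms in \<open>auto intro: mult_pos_pos mult_neg_neg\<close>)
qed fact

text \<open>Clearing the poles at the ends of the gap \<open>(c, d)\<close> gives a function \<open>g\<close> that is
  continuous on \<open>[c, d]\<close>, positive at \<open>c\<close> and negative at \<open>d\<close>.\<close>

lemma F_root_in_gap:
  assumes k: "1 \<le> k" "k < n"
  shows "\<exists>t. 1 - x (Suc k) < t \<and> t < 1 - x k \<and> F t = 0"
proof -
  define c where "c = 1 - x (Suc k)"
  define d where "d = 1 - x k"
  define R where "R = {1..n} - {k, Suc k}"
  define g where "g t = a (Suc k) * (d - t) - a k * (t - c)
       + (t - c) * (d - t) * (\<Sum>j\<in>R. a j / (t - (1 - x j)))" for t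
  have cd: "c < d" unfolding c_def d_def using x_mono k by auto
  have R_no_pole: "t - (1 - x j) \<noteq> 0" if "j \<in> R" "c \<le> t" "t \<le> d" for j t
    using that pole_outside_gap[OF k, of j] x_strict_mono[of j k] x_strict_mono[of "Suc k" j] k
    unfolding R_def c_def d_def by (cases "j < k") auto
  have "continuous_on {c..d} g"
    unfolding g_def using R_no_pole by (intro continuous_intros) auto
  moreover have "g c > 0" "g d < 0"
    using a_pos[of k] a_pos[of "Suc k"] k cd unfolding g_def by auto
  ultimately obtain t where t: "c < t" "t < d" "g t = 0"
    using IVT2'[of g d 0 c] cd by (metis atLeastAtMost_iff less_eq_real_def less_irrefl)
  have split: "{1..n} = insert k (insert (Suc k) R)"
    using k unfolding R_def by auto
  have "F t = a k / (t - d) + a (Suc k) / (t - c) + (\<Sum>j\<in>R. a j / (t - (1 - x j)))"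
    unfolding F_def split c_def d_def by (simp add: R_def)
  moreover have "a k / (t - d) * ((t - c) * (d - t)) = - a k * (t - c)"
    and "a (Suc k) / (t - c) * ((t - c) * (d - t)) = a (Suc k) * (d - t)"
    using t by (simp_all add: field_simps)
  ultimately have "F t * ((t - c) * (d - t)) = g t"
    unfolding g_def by (simp only: distrib_right) (simp add: algebra_simps)
  then show ?thesis using t unfolding c_def d_def by (intro exI[of _ t]) auto
qed

text \<open>\<open>y i\<close> is the root in the \<open>i\<close>-th gap counted from the left, i.e. in the gap of index
  \<open>n - i\<close> between the poles \<open>1 - x (n - i + 1) < 1 - x (n - i)\<close>.\<close>

definition y :: "nat \<Rightarrow> real" where
  "y i = (SOME t. 1 - x (n - i + 1) < t \<and> t < 1 - x (n - i) \<and> F t = 0)"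

lemma y_in_gap:
  assumes "i \<in> {1..n-1}"
  shows "1 - x (n - i + 1) < y i \<and> y i < 1 - x (n - i) \<and> F (y i) = 0"
proof -
  have "\<exists>t. 1 - x (Suc (n - i)) < t \<and> t < 1 - x (n - i) \<and> F t = 0"
    using assms by (intro F_root_in_gap) auto
  then have "\<exists>t. 1 - x (n - i + 1) < t \<and> t < 1 - x (n - i) \<and> F t = 0"
    by simp
  then show ?thesis unfolding y_def by (rule someI_ex)
qed

lemma F_eq_0_iff_in_gap:
  assumes i: "i \<in> {1..n-1}" and t: "1 - x (n - i + 1) < t" "t < 1 - x (n - i)"
  shows "F t = 0 \<longleftrightarrow> t = y i"
proof
  assume "F t = 0"
  have k: "1 \<le> n - i" "n - i < n" using i by auto
  have "1 - x (Suc (n - i)) < y i" "y i < 1 - x (n - i)" "F (y i) = 0"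
    using y_in_gap[OF i] by auto
  then show "t = y i"
    using F_strict_antimono_gap[OF k, of t "y i"] F_strict_antimono_gap[OF k, of "y i" t]
      t \<open>F t = 0\<close> by (cases t "y i" rule: linorder_cases) auto
qed (use y_in_gap[OF i] in simp)

lemma y_mono: "1 \<le> i \<Longrightarrow> i < n - 1 \<Longrightarrow> y i < y (Suc i)"
  using y_in_gap[of i] y_in_gap[of "Suc i"] by (simp add: Suc_diff_Suc)

lemma y_strict_mono: "1 \<le> i \<Longrightarrow> i < j \<Longrightarrow> j \<le> n - 1 \<Longrightarrow> y i < y j"
  by (rule lift_Suc_mono_less_ivl[where N = "{1..<n-1}"]) (auto intro: y_mono)

lemma inj_on_y: "inj_on y {1..n-1}"
  by (rule linorder_inj_onI) (use y_strict_mono in force)+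

lemma y_in_01:
  assumes "i \<in> {1..n-1}"
  shows "0 < y i \<and> y i < 1"
proof -
  have "n - i + 1 \<in> {1..n}" "n - i \<in> {1..n}" using assms by auto
  then show ?thesis using y_in_gap[OF assms] x_in_01 by fastforce
qed

lemma y_ne_pole:
  assumes "i \<in> {1..n-1}" "j \<in> {1..n}"
  shows "y i \<noteq> 1 - x j"
proof -
  have "1 \<le> n - i" "n - i < n" using assms(1) by auto
  then show ?thesis using y_in_gap[OF assms(1)] pole_outside_gap[OF _ _ assms(2)] by fastforce
qed

definition Y :: "real set" where "Y = y ` {1..n-1}"

definition W :: "real set" where "W = {0, 1} \<union> Y"

lemma W_eq_insert: "W = insert 0 (insert 1 Y)"
  unfolding W_def by auto

lemma finite_Y: "finite Y" and finite_W: "finite W"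
  unfolding W_def Y_def by simp_all

lemma Y_in_01: "v \<in> Y \<Longrightarrow> 0 < v \<and> v < 1"
  unfolding Y_def using y_in_01 by auto

lemma zero_notin_Y: "0 \<notin> Y" and one_notin_Y: "1 \<notin> Y"
  using Y_in_01 by force+

lemma card_Y: "card Y = n - 1"
  unfolding Y_def using inj_on_y by (simp add: card_image)

lemma card_W: "card W = n + 1"
  unfolding W_eq_insert using finite_Y card_Y n_pos zero_notin_Y one_notin_Y by simp

lemma W_subset_01: "W \<subseteq> {0..1}"
  unfolding W_def using Y_in_01 by force

lemma W_ne_pole:
  assumes "w \<in> W" "j \<in> {1..n}"
  shows "w \<noteq> 1 - x j"
  using assms x_in_01[OF assms(2)] y_ne_pole[OF _ assms(2)] unfolding W_def Y_def by fastforce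

definition Q :: "real \<Rightarrow> real" where
  "Q t = (\<Prod>j=1..n. t - (1 - x j))"

text \<open>The weights of the partial fraction expansion of \<open>Q(z) / \<Prod>w\<in>W. (z - w)\<close>; they turn
  out to be the masses of the atoms of \<open>\<nu>\<close>.\<close>

definition weight :: "real \<Rightarrow> real" where
  "weight w = Q w / (\<Prod>v\<in>W-{w}. w - v)"

definition Qpoly :: "complex poly" where
  "Qpoly = (\<Prod>j=1..n. [:- complex_of_real (1 - x j), 1:])"

lemma poly_Qpoly: "poly Qpoly z = (\<Prod>j=1..n. z - complex_of_real (1 - x j))"
  unfolding Qpoly_def poly_prod poly_monic_linear ..

lemma degree_Qpoly: "degree Qpoly = n" and coeff_Qpoly: "coeff Qpoly n = 1"
  unfolding Qpoly_def
  using degree_prod_monic_linear[of "\<lambda>j. complex_of_real (1 - x j)" "{1..n}"]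
    coeff_prod_monic_linear[of "\<lambda>j. complex_of_real (1 - x j)" "{1..n}"] by simp_all

lemma Qpoly_interpolation_conditions:
  shows "finite W" "inj_on complex_of_real W" "degree Qpoly < card W"
  using finite_W inj_on_complex_of_real by (simp_all add: degree_Qpoly card_W)

lemma of_real_weight:
  "complex_of_real (weight w)
     = poly Qpoly (of_real w) / (\<Prod>v\<in>W-{w}. complex_of_real w - complex_of_real v)"
  unfolding weight_def Q_def poly_Qpoly by simp

lemma weight_nonzero:
  assumes "w \<in> W"
  shows "weight w \<noteq> 0"
  using assms W_ne_pole[OF assms] finite_W unfolding weight_def Q_def by auto

lemma sum_weight: "(\<Sum>w\<in>W. weight w) = 1"
proof -
  have "coeff Qpoly (card W - 1) = complex_of_real (\<Sum>w\<in>W. weight w)"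
    unfolding lagrange_leading_coeff[OF Qpoly_interpolation_conditions] by (simp add: of_real_weight)
  then show ?thesis
    using card_W coeff_Qpoly by (metis add_diff_cancel_right' of_real_eq_1_iff)
qed

lemma weight_partial_fractions:
  assumes "z \<notin> complex_of_real ` W"
  shows "poly Qpoly z / (\<Prod>w\<in>W. z - complex_of_real w)
           = (\<Sum>w\<in>W. complex_of_real (weight w) / (z - complex_of_real w))"
  by (simp add: partial_fractions[OF Qpoly_interpolation_conditions assms] of_real_weight)

lemma sum_weight_divide_pole:
  assumes i: "i \<in> {1..n}"
  shows "(\<Sum>w\<in>W. weight w / (w - (1 - x i))) = 0"
proof -
  let ?b = "complex_of_real (1 - x i)"
  have "?b \<notin> complex_of_real ` W"
    using W_ne_pole[OF _ i] by (metis imageE of_real_eq_iff)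
  note expansion = weight_partial_fractions[OF this]
  have "poly Qpoly ?b = 0"
    unfolding poly_Qpoly using i by (intro prod_zero) auto
  then have "(\<Sum>w\<in>W. complex_of_real (weight w) / (?b - complex_of_real w)) = 0"
    by (simp only: expansion[symmetric] div_0)
  then have "complex_of_real (\<Sum>w\<in>W. weight w / ((1 - x i) - w)) = 0"
    by simp
  then have "(\<Sum>w\<in>W. weight w / ((1 - x i) - w)) = 0"
    by (simp only: of_real_eq_0_iff)
  moreover have "weight w / (w - (1 - x i)) = - (weight w / ((1 - x i) - w))" for w
    by (metis minus_diff_eq divide_minus_right)
  ultimately show ?thesis
    by (simp only: sum_negf neg_equal_0_iff_equal)
qed

text \<open>The numerator of \<open>F\<close> over the common denominator \<open>Q\<close> has leading coefficient
  \<open>\<Sum>a = 1\<close> and vanishes at the \<open>n - 1\<close> roots \<open>y i\<close>.\<close>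

lemma numerator_F_eq_prod_Y:
  "(\<Sum>i=1..n. complex_of_real (a i) * (\<Prod>j\<in>{1..n}-{i}. z - complex_of_real (1 - x j)))
     = (\<Prod>v\<in>Y. z - complex_of_real v)"
proof -
  define P where "P = (\<Sum>i=1..n. smult (complex_of_real (a i))
                          (\<Prod>j\<in>{1..n}-{i}. [:- complex_of_real (1 - x j), 1:]))"
  define PY where "PY = (\<Prod>v\<in>Y. [:- complex_of_real v, 1:])"
  have card_minus: "card ({1..n} - {i}) = n - 1" if "i \<in> {1..n}" for i
    using that by simp
  have "P = PY"
  proof (rule poly_eqI_degree_lead_coeff[where n = "n - 1" and A = "complex_of_real ` Y"])
    have "coeff P (n - 1) = (\<Sum>i=1..n. complex_of_real (a i))"
      unfolding P_def coeff_sum coeff_smult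
    proof (intro sum.cong refl)
      fix i assume "i \<in> {1..n}"
      then show "complex_of_real (a i) * coeff (\<Prod>j\<in>{1..n}-{i}. [:- complex_of_real (1 - x j), 1:]) (n - 1)
                   = complex_of_real (a i)"
        using coeff_prod_monic_linear[of "\<lambda>j. complex_of_real (1 - x j)" "{1..n} - {i}"] card_minus
        by simp
    qed
    then show "coeff P (n - 1) = coeff PY (n - 1)"
      using a_sum coeff_prod_monic_linear[of complex_of_real Y]
      by (simp add: PY_def card_Y flip: of_real_sum)
    show "n - 1 \<le> card (complex_of_real ` Y)"
      using card_Y card_image[OF inj_on_complex_of_real] by simp
    have "degree (smult (complex_of_real (a i)) (\<Prod>j\<in>{1..n}-{i}. [:- complex_of_real (1 - x j), 1:]))
            \<le> n - 1" if "i \<in> {1..n}" for i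
      using degree_smult_le[THEN order.trans]
        degree_prod_monic_linear[of "\<lambda>j. complex_of_real (1 - x j)" "{1..n} - {i}"] card_minus[OF that]
      by simp
    then show "degree P \<le> n - 1"
      unfolding P_def by (intro degree_sum_le) auto
    show "degree PY \<le> n - 1"
      by (simp add: PY_def degree_prod_monic_linear card_Y)
  next
    fix z assume "z \<in> complex_of_real ` Y"
    then obtain i where i: "i \<in> {1..n-1}" and z: "z = complex_of_real (y i)"
      unfolding Y_def by auto
    have "(\<Sum>k=1..n. a k * (\<Prod>j\<in>{1..n}-{k}. y i - (1 - x j))) = F (y i) * Q (y i)"
      unfolding F_def Q_def using y_ne_pole[OF i] by (subst sum_divide_times_prod) auto
    moreover have "poly P z = complex_of_real (\<Sum>k=1..n. a k * (\<Prod>j\<in>{1..n}-{k}. y i - (1 - x j)))"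
      unfolding P_def z by (simp add: poly_sum poly_prod algebra_simps)
    ultimately have "poly P z = 0"
      using y_in_gap[OF i] by simp
    moreover have "poly PY z = 0"
      using i finite_Y unfolding PY_def z Y_def by (simp add: poly_prod prod_zero_iff)
    ultimately show "poly P z = poly PY z" by simp
  qed
  have "poly P z = (\<Sum>i=1..n. complex_of_real (a i) * (\<Prod>j\<in>{1..n}-{i}. z - complex_of_real (1 - x j)))"
    unfolding P_def poly_sum poly_smult poly_prod poly_monic_linear ..
  moreover have "poly PY z = (\<Prod>v\<in>Y. z - complex_of_real v)"
    unfolding PY_def poly_prod poly_monic_linear ..
  ultimately show ?thesis using \<open>P = PY\<close> by simp
qed

lemma F_times_Q:
  assumes "\<And>j. j \<in> {1..n} \<Longrightarrow> t \<noteq> 1 - x j"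
  shows "F t * Q t = (\<Prod>v\<in>Y. t - v)"
proof -
  have "complex_of_real (F t * Q t) = complex_of_real (\<Prod>v\<in>Y. t - v)"
    using numerator_F_eq_prod_Y[of "complex_of_real t"] assms
    unfolding F_def Q_def by (subst sum_divide_times_prod) auto
  then show ?thesis by (simp only: of_real_eq_iff)
qed

lemma weight_one: "weight 1 = 1 / (\<Sum>i=1..n. a i / x i)"
proof -
  have "W - {1} = insert 0 Y" unfolding W_def using one_notin_Y by auto
  then have "(\<Prod>v\<in>W-{1}. 1 - v) = (\<Prod>v\<in>Y. 1 - v)"
    using finite_Y zero_notin_Y by simp
  also have "\<dots> = F 1 * Q 1"
    using x_in_01 by (intro F_times_Q[symmetric]) fastforce
  finally have "weight 1 = Q 1 / (F 1 * Q 1)" unfolding weight_def by simp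
  moreover have "Q 1 \<noteq> 0" unfolding Q_def using x_in_01 by fastforce
  moreover have "F 1 = (\<Sum>i=1..n. a i / x i)" unfolding F_def by simp
  ultimately show ?thesis by simp
qed

definition stieltjes_W :: "complex \<Rightarrow> complex" where
  "stieltjes_W z = (\<Sum>w\<in>W. complex_of_real (weight w) / (complex_of_real w - z))"

lemma stieltjes_W_formula:
  assumes z: "Im z \<noteq> 0"
  shows "stieltjes_W z
           = 1 / (z * (1 - z) * (\<Sum>i=1..n. complex_of_real (a i) / (z - complex_of_real (1 - x i))))"
proof -
  define Fz where "Fz = (\<Sum>i=1..n. complex_of_real (a i) / (z - complex_of_real (1 - x i)))"
  define Pz where "Pz = (\<Prod>v\<in>Y. z - complex_of_real v)"
  have no_pole: "z \<noteq> complex_of_real t" for t using z by auto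
  have prod_W: "(\<Prod>w\<in>W. z - complex_of_real w) = z * (z - 1) * Pz"
    unfolding W_eq_insert Pz_def using finite_Y zero_notin_Y one_notin_Y by (simp add: prod.insert)
  have expansion: "stieltjes_W z = - (poly Qpoly z / (\<Prod>w\<in>W. z - complex_of_real w))"
  proof -
    have "complex_of_real (weight w) / (complex_of_real w - z)
            = - (complex_of_real (weight w) / (z - complex_of_real w))" for w
      by (metis minus_diff_eq divide_minus_right)
    then have "stieltjes_W z = - (\<Sum>w\<in>W. complex_of_real (weight w) / (z - complex_of_real w))"
      unfolding stieltjes_W_def by (simp only: sum_negf)
    then show ?thesis
      using no_pole by (subst weight_partial_fractions) auto
  qed
  have numerator: "Fz * poly Qpoly z = Pz"
    unfolding Fz_def Pz_def poly_Qpoly numerator_F_eq_prod_Y[symmetric]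
    using z by (intro sum_divide_times_prod) auto
  have "Pz \<noteq> 0" unfolding Pz_def using finite_Y z by auto
  then have "Fz \<noteq> 0" using numerator by auto
  moreover have "poly Qpoly z \<noteq> 0" "z \<noteq> 0" "1 - z \<noteq> 0"
    unfolding poly_Qpoly using z by auto
  ultimately show ?thesis
    unfolding Fz_def[symmetric] expansion prod_W numerator[symmetric] by (simp add: field_simps)
qed

lemma sum_a_x_divide_at_W:
  assumes w: "w \<in> W" "w \<noteq> 0"
  shows "(\<Sum>i=1..n. a i * x i / (w - (1 - x i))) = 1"
proof -
  have "(\<Sum>i=1..n. a i * x i / (w - (1 - x i)))
          = (\<Sum>i=1..n. a i + (1 - w) * (a i / (w - (1 - x i))))"
    using W_ne_pole[OF w(1)] by (intro sum.cong refl) (simp add: field_simps)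
  also have "\<dots> = 1 + (1 - w) * F w"
    unfolding sum.distrib F_def sum_distrib_left a_sum ..
  moreover have "(1 - w) * F w = 0"
    using w y_in_gap unfolding W_def Y_def by auto
  ultimately show ?thesis by simp
qed

lemma weight_moments_renewal_equation:
  assumes N: "N \<ge> 1"
  shows "(\<Sum>k\<le>N. Kdisc n a x k * (\<Sum>w\<in>W. weight w * w ^ (N - k))) = (\<Sum>w\<in>W. weight w * w ^ N)"
proof -
  have "(\<Sum>k\<le>N. Kdisc n a x k * (\<Sum>w\<in>W. weight w * w ^ (N - k)))
          = (\<Sum>w\<in>W. weight w * (\<Sum>k\<le>N. Kdisc n a x k * w ^ (N - k)))"
    by (simp add: sum_distrib_left mult.left_commute) (rule sum.swap)
  also have "\<dots> = (\<Sum>w\<in>W. weight w * (\<Sum>i=1..n. a i * x i * ((w ^ N - (1 - x i) ^ N) / (w - (1 - x i)))))"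
    using W_ne_pole
    by (intro sum.cong refl arg_cong[where f = "(*) _"] Kdisc_convolution_power) auto
  also have "\<dots> = (\<Sum>w\<in>W. weight w * w ^ N * (\<Sum>i=1..n. a i * x i / (w - (1 - x i))))
      - (\<Sum>i=1..n. a i * x i * (1 - x i) ^ N * (\<Sum>w\<in>W. weight w / (w - (1 - x i))))"
    by (simp add: sum_distrib_left sum_subtractf[symmetric] diff_divide_distrib algebra_simps
        sum.swap[of _ W])
  also have "\<dots> = (\<Sum>w\<in>W. weight w * w ^ N)"
  proof -
    have "weight w * w ^ N * (\<Sum>i=1..n. a i * x i / (w - (1 - x i))) = weight w * w ^ N"
      if "w \<in> W" for w
      using N sum_a_x_divide_at_W[OF that] by (cases "w = 0") auto
    then have "(\<Sum>w\<in>W. weight w * w ^ N * (\<Sum>i=1..n. a i * x i / (w - (1 - x i))))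
                 = (\<Sum>w\<in>W. weight w * w ^ N)"
      by (rule sum.cong[OF refl])
    moreover have "(\<Sum>i=1..n. a i * x i * (1 - x i) ^ N * (\<Sum>w\<in>W. weight w / (w - (1 - x i)))) = 0"
      by (simp add: sum_weight_divide_pole)
    ultimately show ?thesis by (simp only: diff_zero)
  qed
  finally show ?thesis .
qed

lemma renewal_prob_eq_weight_moments:
  "renewal_prob (Kdisc n a x) N = (\<Sum>w\<in>W. weight w * w ^ N)"
proof (rule renewal_prob_unique)
  show "Kdisc n a x 0 = 0" by (simp add: Kdisc_def)
  show "(\<Sum>w\<in>W. weight w * w ^ 0) = 1" by (simp add: sum_weight)
qed (rule weight_moments_renewal_equation[symmetric])

lemma weight_one_eq_inverse_mean: "weight 1 = 1 / mean_K (Kdisc n a x)"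
proof -
  have "mean_K (Kdisc n a x) = (\<Sum>i=1..n. a i / x i)"
    using x_in_01 by (intro mean_K_Kdisc) (simp add: less_imp_le)
  then show ?thesis by (simp add: weight_one)
qed

end

section \<open>The measure \<open>\<nu>\<close>\<close>

locale atomic_renewal_measure = atomic_renewal +
  fixes \<nu> :: "real measure"
  assumes nu_prob: "prob_space \<nu>" and nu_borel: "sets \<nu> = sets borel"
    and nu_supp: "measure \<nu> {0..1} = 1"
    and nu_moments: "\<And>N::nat. renewal_prob (Kdisc n a x) N = (\<integral>t. t ^ N \<partial>\<nu>)"
begin

sublocale P: prob_space \<nu> by (rule nu_prob)

lemma measure_nu_singleton: "measure \<nu> {t} = (if t \<in> W then weight t else 0)"
  by (rule measure_singleton_of_moments[OF nu_prob nu_borel nu_supp finite_W W_subset_01])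
    (simp add: nu_moments[symmetric] renewal_prob_eq_weight_moments)

lemma weight_pos: "w \<in> W \<Longrightarrow> 0 < weight w"
  using measure_nu_singleton[of w] measure_nonneg[of \<nu> "{w}"] weight_nonzero[of w] by simp

lemma atoms_nu: "{t. measure \<nu> {t} > 0} = W"
  using weight_pos by (auto simp: measure_nu_singleton split: if_splits)

lemma measure_nu_W: "measure \<nu> W = 1"
proof -
  have "measure \<nu> W = (\<Sum>w\<in>W. measure \<nu> {w})"
    using finite_W nu_borel P.emeasure_finite
    by (intro measure_eq_sum_singleton) auto
  then show ?thesis by (simp add: measure_nu_singleton sum_weight)
qed

lemma stieltjes_nu: "stieltjes \<nu> z = stieltjes_W z"
proof -
  have "AE t in \<nu>. t \<in> W"
    using P.AE_in_set_eq_1[of W] measure_nu_W finite_W nu_borel by (simp add: finite_imp_closed)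
  then have "stieltjes \<nu> z = (\<Sum>w\<in>W. measure \<nu> {w} *\<^sub>R (1 / (complex_of_real w - z)))"
    unfolding stieltjes_def using finite_W nu_borel
    by (intro integral_eq_sum_atoms) (auto simp: P.finite_measure_axioms)
  then show ?thesis
    by (simp add: stieltjes_W_def measure_nu_singleton scaleR_conv_of_real)
qed

lemma tendsto_residue_stieltjes_nu:
  assumes "w \<in> W"
  shows "((\<lambda>z. (complex_of_real w - z) * stieltjes \<nu> z) \<longlongrightarrow> complex_of_real (measure \<nu> {w}))
           (at (complex_of_real w) within S)"
  using tendsto_residue_simple_poles[OF finite_W inj_on_complex_of_real assms,
      of "\<lambda>w. complex_of_real (weight w)"] assms
  by (simp add: stieltjes_nu stieltjes_W_def measure_nu_singleton)

lemma renewal_prob_expansion: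
  assumes N: "N \<ge> 1"
  shows "renewal_prob (Kdisc n a x) N
           = 1 / mean_K (Kdisc n a x) + (\<Sum>i=1..n-1. y i ^ N * measure \<nu> {y i})"
proof -
  have "renewal_prob (Kdisc n a x) N = weight 1 + (\<Sum>v\<in>Y. weight v * v ^ N)"
    using N finite_Y zero_notin_Y one_notin_Y by (simp add: renewal_prob_eq_weight_moments W_eq_insert)
  also have "(\<Sum>v\<in>Y. weight v * v ^ N) = (\<Sum>i=1..n-1. y i ^ N * measure \<nu> {y i})"
    unfolding Y_def using inj_on_y
    by (simp add: sum.reindex measure_nu_singleton W_def Y_def mult.commute)
  finally show ?thesis by (simp add: weight_one_eq_inverse_mean)
qed

end

theorem corollary1:
  fixes n :: nat and x a :: "nat \<Rightarrow> real" and \<nu> :: "real measure"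
  assumes n_pos: "n \<ge> 1"
    and x_pos: "0 < x 1" and x_mono: "\<And>i. 1 \<le> i \<Longrightarrow> i < n \<Longrightarrow> x i < x (Suc i)" and x_lt1: "x n < 1"
    and a_pos: "\<And>i. 1 \<le> i \<Longrightarrow> i \<le> n \<Longrightarrow> a i > 0"
    and a_sum: "(\<Sum>i=1..n. a i) = 1"
    and nu_prob: "prob_space \<nu>" and nu_borel: "sets \<nu> = sets borel"
    and nu_supp: "measure \<nu> {0..1} = 1"
    and nu_moments: "\<And>N::nat. renewal_prob (Kdisc n a x) N = (\<integral>t. t ^ N \<partial>\<nu>)"
  shows
    "(\<forall>z. Im z > 0 \<longrightarrow>
        stieltjes \<nu> z = 1 / (z * (1 - z) * (\<Sum>i=1..n. complex_of_real (a i) / (z - complex_of_real (1 - x i)))))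
     \<and> (\<exists>y :: nat \<Rightarrow> real.
          (\<forall>i\<in>{1..n-1}. 1 - x (n - i + 1) < y i \<and> y i < 1 - x (n - i)
              \<and> (\<forall>t. 1 - x (n - i + 1) < t \<and> t < 1 - x (n - i) \<longrightarrow>
                     ((\<Sum>j=1..n. a j / (t - (1 - x j))) = 0 \<longleftrightarrow> t = y i)))
        \<and> (n \<ge> 2 \<longrightarrow> 0 < y 1 \<and> y (n - 1) < 1)
        \<and> (\<forall>i. 1 \<le> i \<and> i < n - 1 \<longrightarrow> y i < y (Suc i))
        \<and> {t. measure \<nu> {t} > 0} = {0, 1} \<union> y ` {1..n-1}
        \<and> card ({0, 1} \<union> y ` {1..n-1}) = n + 1
        \<and> measure \<nu> ({0, 1} \<union> y ` {1..n-1}) = 1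
        \<and> (\<forall>i\<in>{1..n-1}.
             ((\<lambda>z. (complex_of_real (y i) - z) * stieltjes \<nu> z)
                \<longlongrightarrow> complex_of_real (measure \<nu> {y i}))
               (at (complex_of_real (y i)) within {z. Im z > 0}))
        \<and> (\<forall>N::nat. N \<ge> 1 \<longrightarrow>
             renewal_prob (Kdisc n a x) N
               = 1 / mean_K (Kdisc n a x) + (\<Sum>i=1..n-1. y i ^ N * measure \<nu> {y i})))"
proof -
  interpret atomic_renewal_measure n x a \<nu>
    by (intro atomic_renewal_measure.intro atomic_renewal.intro atomic_renewal_measure_axioms.intro)
      (fact assms)+
  have W: "{0, 1} \<union> y ` {1..n-1} = W" unfolding W_def Y_def ..
  have formula: "\<forall>z. Im z > 0 \<longrightarrow> stieltjes \<nu> z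
      = 1 / (z * (1 - z) * (\<Sum>i=1..n. complex_of_real (a i) / (z - complex_of_real (1 - x i))))"
    using stieltjes_nu stieltjes_W_formula by simp
  have roots: "\<forall>i\<in>{1..n-1}. 1 - x (n - i + 1) < y i \<and> y i < 1 - x (n - i)
      \<and> (\<forall>t. 1 - x (n - i + 1) < t \<and> t < 1 - x (n - i) \<longrightarrow>
             ((\<Sum>j=1..n. a j / (t - (1 - x j))) = 0 \<longleftrightarrow> t = y i))"
    using y_in_gap F_eq_0_iff_in_gap unfolding F_def by blast
  have ends: "n \<ge> 2 \<longrightarrow> 0 < y 1 \<and> y (n - 1) < 1"
    using y_in_01[of 1] y_in_01[of "n - 1"] by auto
  have residues: "\<forall>i\<in>{1..n-1}. ((\<lambda>z. (complex_of_real (y i) - z) * stieltjes \<nu> z)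
      \<longlongrightarrow> complex_of_real (measure \<nu> {y i})) (at (complex_of_real (y i)) within {z. Im z > 0})"
    using tendsto_residue_stieltjes_nu unfolding W_def Y_def by blast
  show ?thesis
    using y_mono renewal_prob_expansion
    by (intro conjI exI[of _ y] formula roots ends residues allI impI
        atoms_nu[folded W] card_W[folded W] measure_nu_W[folded W]) auto
qed

end
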